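(* For every term $t$ over $\Sigma_f(X)$, the equation $0\cdot t=0\cdot\sum_{x\in\mathsf{VAR}(t)}x$ is derivable in equational logic from $\mathsf{Md}_\bot$, where the empty sum is $0$.
   Context: $\Sigma_f$ is the signature with one sort, constants $0,1$, binary operations $+,\cdot$ and unary operation $-$; $\Sigma_{md,\bot}$ extends it with a constant $\bot$ and a unary operation $(\,\cdot\,)^{-1}$. $\Sigma_f(X)$ denotes terms over $\Sigma_f$ with variables from $X$, and $\mathsf{VAR}(t)$ is the set of variables occurring in $t$. $\mathsf{Md}_\bot$ is the set of $\Sigma_{md,\bot}$-equations (variables universally quantified): $(x+y)+z=x+(y+z)$; $x+y=y+x$; $x+0=x$; $x+(-x)=0\cdot x$; $(x\cdot y)\cdot z=x\cdot(y\cdot z)$; $x\cdot y=y\cdot x$; $1\cdot x=x$; $x\cdot(y+z)=x\cdot y+x\cdot z$; $-(-x)=x$; $0\cdot(x\cdot x)=0\cdot x$; $(x^{-1})^{-1}=x+0\cdot x^{-1}$; $x\cdot x^{-1}=1+0\cdot x^{-1}$; $(x\cdot y)^{-1}=x^{-1}\cdot y^{-1}$; $1^{-1}=1$; $0^{-1}=\bot$; $x+\bot=\bot$; $x\cdot\bot=\bot$. *)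

theory Defs
  imports Main
begin

datatype 'v trm =
    Var 'v
  | Zero
  | One
  | Add "'v trm" "'v trm"
  | Mul "'v trm" "'v trm"
  | Neg "'v trm"
  | Bot
  | Inv "'v trm"

fun is_f_term :: "'v trm \<Rightarrow> bool" where
  "is_f_term (Var x) = True"
| "is_f_term Zero = True"
| "is_f_term One = True"
| "is_f_term (Add s t) = (is_f_term s \<and> is_f_term t)"
| "is_f_term (Mul s t) = (is_f_term s \<and> is_f_term t)"
| "is_f_term (Neg s) = is_f_term s"
| "is_f_term Bot = False"
| "is_f_term (Inv s) = False"

fun VAR :: "'v trm \<Rightarrow> 'v set" where
  "VAR (Var x) = {x}"
| "VAR Zero = {}"
| "VAR One = {}"
| "VAR (Add s t) = VAR s \<union> VAR t"
| "VAR (Mul s t) = VAR s \<union> VAR t"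
| "VAR (Neg s) = VAR s"
| "VAR Bot = {}"
| "VAR (Inv s) = VAR s"

fun subst :: "('v \<Rightarrow> 'v trm) \<Rightarrow> 'v trm \<Rightarrow> 'v trm" where
  "subst \<sigma> (Var x) = \<sigma> x"
| "subst \<sigma> Zero = Zero"
| "subst \<sigma> One = One"
| "subst \<sigma> (Add s t) = Add (subst \<sigma> s) (subst \<sigma> t)"
| "subst \<sigma> (Mul s t) = Mul (subst \<sigma> s) (subst \<sigma> t)"
| "subst \<sigma> (Neg s) = Neg (subst \<sigma> s)"
| "subst \<sigma> Bot = Bot"
| "subst \<sigma> (Inv s) = Inv (subst \<sigma> s)"

definition Md_bot :: "('v \<times> 'v \<times> 'v) \<Rightarrow> ('v trm \<times> 'v trm) set" where
  "Md_bot xyz = (case xyz of (x0, y0, z0) \<Rightarrow>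
     (let x = Var x0; y = Var y0; z = Var z0 in
     { (Add (Add x y) z, Add x (Add y z)),
       (Add x y, Add y x),
       (Add x Zero, x),
       (Add x (Neg x), Mul Zero x),
       (Mul (Mul x y) z, Mul x (Mul y z)),
       (Mul x y, Mul y x),
       (Mul One x, x),
       (Mul x (Add y z), Add (Mul x y) (Mul x z)),
       (Neg (Neg x), x),
       (Mul Zero (Mul x x), Mul Zero x),
       (Inv (Inv x), Add x (Mul Zero (Inv x))),
       (Mul x (Inv x), Add One (Mul Zero (Inv x))),
       (Inv (Mul x y), Mul (Inv x) (Inv y)),
       (Inv One, One),
       (Inv Zero, Bot),
       (Add x Bot, Bot),
       (Mul x Bot, Bot) }))"

inductive derivable :: "('v trm \<times> 'v trm) set \<Rightarrow> 'v trm \<Rightarrow> 'v trm \<Rightarrow> bool"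
  for E where
  ax: "(s, t) \<in> E \<Longrightarrow> derivable E (subst \<sigma> s) (subst \<sigma> t)"
| refl: "derivable E t t"
| sym: "derivable E s t \<Longrightarrow> derivable E t s"
| trans: "derivable E s t \<Longrightarrow> derivable E t u \<Longrightarrow> derivable E s u"
| cong_Add: "derivable E s1 t1 \<Longrightarrow> derivable E s2 t2 \<Longrightarrow> derivable E (Add s1 s2) (Add t1 t2)"
| cong_Mul: "derivable E s1 t1 \<Longrightarrow> derivable E s2 t2 \<Longrightarrow> derivable E (Mul s1 s2) (Mul t1 t2)"
| cong_Neg: "derivable E s t \<Longrightarrow> derivable E (Neg s) (Neg t)"
| cong_Inv: "derivable E s t \<Longrightarrow> derivable E (Inv s) (Inv t)"

fun var_sum :: "'v list \<Rightarrow> 'v trm" where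
  "var_sum [] = Zero"
| "var_sum [x] = Var x"
| "var_sum (x # xs) = Add (Var x) (var_sum xs)"

end

theory Submission
  imports Defs
begin

text \<open>On terms of the form \<open>0 \<cdot> a\<close> the meadow axioms make \<open>+\<close> associative, commutative and
idempotent with unit \<open>0\<close>. The map \<open>t \<mapsto> 0 \<cdot> t\<close> kills the constants, ignores \<open>-\<close>, and turns both
\<open>s + t\<close> and \<open>s \<cdot> t\<close> into \<open>0 \<cdot> s + 0 \<cdot> t\<close> (the latter using \<open>0 \<cdot> a\<^sup>2 = 0 \<cdot> a\<close>). So by induction
\<open>0 \<cdot> t\<close> is the idempotent sum of the \<open>0 \<cdot> x\<close> over the variables \<open>x\<close> of \<open>t\<close>, which is \<open>0 \<cdot> \<Sum>x\<close>.\<close>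

lemma finite_VAR: "finite (VAR t)"
  by (induction t) auto

lemma derivable_cong_Add1: "derivable E a a' \<Longrightarrow> derivable E (Add a b) (Add a' b)"
  by (rule derivable.cong_Add[OF _ derivable.refl])

lemma derivable_cong_Add2: "derivable E b b' \<Longrightarrow> derivable E (Add a b) (Add a b')"
  by (rule derivable.cong_Add[OF derivable.refl])

lemma derivable_cong_Mul1: "derivable E a a' \<Longrightarrow> derivable E (Mul a b) (Mul a' b)"
  by (rule derivable.cong_Mul[OF _ derivable.refl])

lemma derivable_cong_Mul2: "derivable E b b' \<Longrightarrow> derivable E (Mul a b) (Mul a b')"
  by (rule derivable.cong_Mul[OF derivable.refl])

lemmas [trans] = derivable.trans

context
  fixes x y z :: 'v
  assumes distinct_xyz: "x \<noteq> y" "y \<noteq> z" "x \<noteq> z"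
begin

abbreviation md_eq :: "'v trm \<Rightarrow> 'v trm \<Rightarrow> bool" (infix "\<approx>" 50)
  where "a \<approx> b \<equiv> derivable (Md_bot (x, y, z)) a b"

definition inst :: "'v trm \<Rightarrow> 'v trm \<Rightarrow> 'v trm \<Rightarrow> 'v \<Rightarrow> 'v trm" where
  "inst a b c v = (if v = x then a else if v = y then b else c)"

lemma inst_simps [simp]: "inst a b c x = a" "inst a b c y = b" "inst a b c z = c"
  using distinct_xyz by (auto simp: inst_def)

lemma md_axiom:
  "(s, t) \<in> Md_bot (x, y, z) \<Longrightarrow> subst (inst a b c) s \<approx> subst (inst a b c) t"
  by (rule derivable.ax)

lemma md_add_assoc: "Add (Add a b) c \<approx> Add a (Add b c)"
  using md_axiom[of "Add (Add (Var x) (Var y)) (Var z)" "Add (Var x) (Add (Var y) (Var z))" a b c]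
  by (simp add: Md_bot_def Let_def)

lemma md_add_comm: "Add a b \<approx> Add b a"
  using md_axiom[of "Add (Var x) (Var y)" "Add (Var y) (Var x)" a b a]
  by (simp add: Md_bot_def Let_def)

lemma md_add_zero: "Add a Zero \<approx> a"
  using md_axiom[of "Add (Var x) Zero" "Var x" a a a]
  by (simp add: Md_bot_def Let_def)

lemma md_add_neg: "Add a (Neg a) \<approx> Mul Zero a"
  using md_axiom[of "Add (Var x) (Neg (Var x))" "Mul Zero (Var x)" a a a]
  by (simp add: Md_bot_def Let_def)

lemma md_mul_assoc: "Mul (Mul a b) c \<approx> Mul a (Mul b c)"
  using md_axiom[of "Mul (Mul (Var x) (Var y)) (Var z)" "Mul (Var x) (Mul (Var y) (Var z))" a b c]
  by (simp add: Md_bot_def Let_def)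

lemma md_mul_comm: "Mul a b \<approx> Mul b a"
  using md_axiom[of "Mul (Var x) (Var y)" "Mul (Var y) (Var x)" a b a]
  by (simp add: Md_bot_def Let_def)

lemma md_one_mul: "Mul One a \<approx> a"
  using md_axiom[of "Mul One (Var x)" "Var x" a a a]
  by (simp add: Md_bot_def Let_def)

lemma md_distrib: "Mul a (Add b c) \<approx> Add (Mul a b) (Mul a c)"
  using md_axiom[of "Mul (Var x) (Add (Var y) (Var z))"
      "Add (Mul (Var x) (Var y)) (Mul (Var x) (Var z))" a b c]
  by (simp add: Md_bot_def Let_def)

lemma md_neg_neg: "Neg (Neg a) \<approx> a"
  using md_axiom[of "Neg (Neg (Var x))" "Var x" a a a]
  by (simp add: Md_bot_def Let_def)

lemma md_zero_mul_square: "Mul Zero (Mul a a) \<approx> Mul Zero a"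
  using md_axiom[of "Mul Zero (Mul (Var x) (Var x))" "Mul Zero (Var x)" a a a]
  by (simp add: Md_bot_def Let_def)

lemma md_zero_add: "Add Zero a \<approx> a"
  using md_add_comm md_add_zero derivable.trans by blast

lemma zero_mul_one: "Mul Zero One \<approx> Zero"
  using md_mul_comm md_one_mul derivable.trans by blast

lemma zero_mul_neg: "Mul Zero (Neg a) \<approx> Mul Zero a"
proof -
  have "Mul Zero (Neg a) \<approx> Add (Neg a) (Neg (Neg a))" by (rule derivable.sym[OF md_add_neg])
  also have "\<dots> \<approx> Add (Neg a) a" by (rule derivable_cong_Add2[OF md_neg_neg])
  also have "\<dots> \<approx> Add a (Neg a)" by (rule md_add_comm)
  also have "\<dots> \<approx> Mul Zero a" by (rule md_add_neg)
  finally show ?thesis .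
qed

lemma zero_mul_zero: "Mul Zero Zero \<approx> Zero"
proof -
  have "Add One (Neg One) \<approx> Zero" using md_add_neg zero_mul_one derivable.trans by blast
  then have "Mul Zero Zero \<approx> Mul Zero (Add One (Neg One))"
    by (rule derivable.sym[OF derivable_cong_Mul2])
  also have "\<dots> \<approx> Add (Mul Zero One) (Mul Zero (Neg One))" by (rule md_distrib)
  also have "\<dots> \<approx> Add Zero Zero"
    by (rule derivable.cong_Add[OF zero_mul_one derivable.trans[OF zero_mul_neg zero_mul_one]])
  also have "\<dots> \<approx> Zero" by (rule md_add_zero)
  finally show ?thesis .
qed

lemma zero_mul_add_idem: "Add (Mul Zero a) (Mul Zero a) \<approx> Mul Zero a"
proof -
  have "Add (Mul Zero a) (Mul Zero a) \<approx> Add (Mul a Zero) (Mul a Zero)"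
    by (rule derivable.cong_Add; rule md_mul_comm)
  also have "\<dots> \<approx> Mul a (Add Zero Zero)" by (rule derivable.sym[OF md_distrib])
  also have "\<dots> \<approx> Mul a Zero" by (rule derivable_cong_Mul2[OF md_add_zero])
  also have "\<dots> \<approx> Mul Zero a" by (rule md_mul_comm)
  finally show ?thesis .
qed

lemma zero_mul_zero_mul: "Mul Zero (Mul Zero a) \<approx> Mul Zero a"
proof -
  have "Mul Zero (Mul Zero a) \<approx> Mul (Mul Zero Zero) a" by (rule derivable.sym[OF md_mul_assoc])
  also have "\<dots> \<approx> Mul Zero a" by (rule derivable_cong_Mul1[OF zero_mul_zero])
  finally show ?thesis .
qed

lemma zero_mul_mul_absorb: "Mul Zero (Mul a b) \<approx> Add (Mul Zero (Mul a b)) (Mul Zero a)"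
proof -
  have "Mul a b \<approx> Mul a (Add b Zero)" by (rule derivable_cong_Mul2[OF derivable.sym[OF md_add_zero]])
  also have "\<dots> \<approx> Add (Mul a b) (Mul a Zero)" by (rule md_distrib)
  also have "\<dots> \<approx> Add (Mul a b) (Mul Zero a)" by (rule derivable_cong_Add2[OF md_mul_comm])
  finally have "Mul Zero (Mul a b) \<approx> Mul Zero (Add (Mul a b) (Mul Zero a))"
    by (rule derivable_cong_Mul2)
  also have "\<dots> \<approx> Add (Mul Zero (Mul a b)) (Mul Zero (Mul Zero a))" by (rule md_distrib)
  also have "\<dots> \<approx> Add (Mul Zero (Mul a b)) (Mul Zero a)"
    by (rule derivable_cong_Add2[OF zero_mul_zero_mul])
  finally show ?thesis .
qed

text \<open>With \<open>p = 0 \<cdot> a b\<close>, absorption gives \<open>p = (0 \<cdot> a + 0 \<cdot> b) + p\<close>, while expanding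
\<open>0 \<cdot> a + 0 \<cdot> b = 0 \<cdot> (a + b)\<^sup>2\<close> gives \<open>0 \<cdot> a + 0 \<cdot> b = (0 \<cdot> a + 0 \<cdot> b) + p\<close>.\<close>
lemma zero_mul_mul: "Mul Zero (Mul a b) \<approx> Add (Mul Zero a) (Mul Zero b)"
proof -
  define p where "p = Mul Zero (Mul a b)"
  define A where "A = Mul Zero a"
  define B where "B = Mul Zero b"
  have p_comm: "Mul Zero (Mul b a) \<approx> p"
    unfolding p_def by (rule derivable_cong_Mul2[OF md_mul_comm])
  have p_absorb_B: "p \<approx> Add p B"
  proof -
    have "p \<approx> Mul Zero (Mul b a)" by (rule derivable.sym[OF p_comm])
    also have "\<dots> \<approx> Add (Mul Zero (Mul b a)) B" unfolding B_def by (rule zero_mul_mul_absorb)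
    also have "\<dots> \<approx> Add p B" by (rule derivable_cong_Add1[OF p_comm])
    finally show ?thesis .
  qed
  have p_absorb: "p \<approx> Add (Add A B) p"
  proof -
    have "p \<approx> Add p A" unfolding p_def A_def by (rule zero_mul_mul_absorb)
    also have "\<dots> \<approx> Add (Add p B) A" by (rule derivable_cong_Add1[OF p_absorb_B])
    also have "\<dots> \<approx> Add p (Add B A)" by (rule md_add_assoc)
    also have "\<dots> \<approx> Add p (Add A B)" by (rule derivable_cong_Add2[OF md_add_comm])
    also have "\<dots> \<approx> Add (Add A B) p" by (rule md_add_comm)
    finally show ?thesis .
  qed
  have expand_a: "Mul Zero (Mul (Add a b) a) \<approx> Add A p"
  proof -
    have "Mul Zero (Mul (Add a b) a) \<approx> Mul Zero (Mul a (Add a b))"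
      by (rule derivable_cong_Mul2[OF md_mul_comm])
    also have "\<dots> \<approx> Mul Zero (Add (Mul a a) (Mul a b))" by (rule derivable_cong_Mul2[OF md_distrib])
    also have "\<dots> \<approx> Add (Mul Zero (Mul a a)) p" unfolding p_def by (rule md_distrib)
    also have "\<dots> \<approx> Add A p" unfolding A_def by (rule derivable_cong_Add1[OF md_zero_mul_square])
    finally show ?thesis .
  qed
  have expand_b: "Mul Zero (Mul (Add a b) b) \<approx> Add p B"
  proof -
    have "Mul Zero (Mul (Add a b) b) \<approx> Mul Zero (Mul b (Add a b))"
      by (rule derivable_cong_Mul2[OF md_mul_comm])
    also have "\<dots> \<approx> Mul Zero (Add (Mul b a) (Mul b b))" by (rule derivable_cong_Mul2[OF md_distrib])
    also have "\<dots> \<approx> Add (Mul Zero (Mul b a)) (Mul Zero (Mul b b))" by (rule md_distrib)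
    also have "\<dots> \<approx> Add p B" unfolding B_def by (rule derivable.cong_Add[OF p_comm md_zero_mul_square])
    finally show ?thesis .
  qed
  have "Add A B \<approx> Mul Zero (Add a b)" unfolding A_def B_def by (rule derivable.sym[OF md_distrib])
  also have "\<dots> \<approx> Mul Zero (Mul (Add a b) (Add a b))" by (rule derivable.sym[OF md_zero_mul_square])
  also have "\<dots> \<approx> Mul Zero (Add (Mul (Add a b) a) (Mul (Add a b) b))"
    by (rule derivable_cong_Mul2[OF md_distrib])
  also have "\<dots> \<approx> Add (Mul Zero (Mul (Add a b) a)) (Mul Zero (Mul (Add a b) b))" by (rule md_distrib)
  also have "\<dots> \<approx> Add (Add A p) (Add p B)" by (rule derivable.cong_Add[OF expand_a expand_b])
  also have "\<dots> \<approx> Add A (Add p (Add p B))" by (rule md_add_assoc)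
  also have "\<dots> \<approx> Add A (Add (Add p p) B)" by (rule derivable_cong_Add2[OF derivable.sym[OF md_add_assoc]])
  also have "\<dots> \<approx> Add A (Add p B)"
    unfolding p_def by (rule derivable_cong_Add2[OF derivable_cong_Add1[OF zero_mul_add_idem]])
  also have "\<dots> \<approx> Add A (Add B p)" by (rule derivable_cong_Add2[OF md_add_comm])
  also have "\<dots> \<approx> Add (Add A B) p" by (rule derivable.sym[OF md_add_assoc])
  also have "\<dots> \<approx> p" by (rule derivable.sym[OF p_absorb])
  finally show ?thesis unfolding p_def A_def B_def by (rule derivable.sym)
qed

abbreviation zero_mul_sum :: "'v list \<Rightarrow> 'v trm" where
  "zero_mul_sum l \<equiv> Mul Zero (var_sum l)"

lemma zero_mul_sum_Nil: "zero_mul_sum [] \<approx> Zero"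
  using zero_mul_zero by simp

lemma zero_mul_sum_Cons: "zero_mul_sum (v # l) \<approx> Add (Mul Zero (Var v)) (zero_mul_sum l)"
proof (cases l)
  case Nil
  have "Mul Zero (Var v) \<approx> Add (Mul Zero (Var v)) Zero" by (rule derivable.sym[OF md_add_zero])
  also have "\<dots> \<approx> Add (Mul Zero (Var v)) (zero_mul_sum [])"
    by (rule derivable_cong_Add2[OF derivable.sym[OF zero_mul_sum_Nil]])
  finally show ?thesis using Nil by simp
next
  case (Cons w l')
  then show ?thesis by (simp add: md_distrib)
qed

lemma zero_mul_sum_append:
  "zero_mul_sum (l1 @ l2) \<approx> Add (zero_mul_sum l1) (zero_mul_sum l2)"
proof (induction l1)
  case Nil
  have "zero_mul_sum ([] @ l2) \<approx> Add Zero (zero_mul_sum l2)"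
    using derivable.sym[OF md_zero_add] by simp
  also have "\<dots> \<approx> Add (zero_mul_sum []) (zero_mul_sum l2)"
    by (rule derivable_cong_Add1[OF derivable.sym[OF zero_mul_sum_Nil]])
  finally show ?case .
next
  case (Cons v l1)
  have "zero_mul_sum ((v # l1) @ l2) \<approx> Add (Mul Zero (Var v)) (zero_mul_sum (l1 @ l2))"
    using zero_mul_sum_Cons by simp
  also have "\<dots> \<approx> Add (Mul Zero (Var v)) (Add (zero_mul_sum l1) (zero_mul_sum l2))"
    by (rule derivable_cong_Add2[OF Cons.IH])
  also have "\<dots> \<approx> Add (Add (Mul Zero (Var v)) (zero_mul_sum l1)) (zero_mul_sum l2)"
    by (rule derivable.sym[OF md_add_assoc])
  also have "\<dots> \<approx> Add (zero_mul_sum (v # l1)) (zero_mul_sum l2)"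
    by (rule derivable_cong_Add1[OF derivable.sym[OF zero_mul_sum_Cons]])
  finally show ?case .
qed

lemma zero_mul_sum_absorb:
  "v \<in> set l \<Longrightarrow> zero_mul_sum l \<approx> Add (zero_mul_sum l) (Mul Zero (Var v))"
proof (induction l)
  case Nil
  then show ?case by simp
next
  case (Cons w l)
  let ?v = "Mul Zero (Var v)"
  show ?case
  proof (cases "v = w")
    case True
    have "zero_mul_sum (w # l) \<approx> Add ?v (zero_mul_sum l)"
      using zero_mul_sum_Cons True by simp
    also have "\<dots> \<approx> Add (Add ?v ?v) (zero_mul_sum l)"
      by (rule derivable_cong_Add1[OF derivable.sym[OF zero_mul_add_idem]])
    also have "\<dots> \<approx> Add ?v (Add ?v (zero_mul_sum l))" by (rule md_add_assoc)
    also have "\<dots> \<approx> Add (Add ?v (zero_mul_sum l)) ?v" by (rule md_add_comm)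
    also have "\<dots> \<approx> Add (zero_mul_sum (w # l)) ?v"
      using derivable_cong_Add1[OF derivable.sym[OF zero_mul_sum_Cons]] True by simp
    finally show ?thesis .
  next
    case False
    with Cons have IH: "zero_mul_sum l \<approx> Add (zero_mul_sum l) ?v" by simp
    let ?w = "Mul Zero (Var w)"
    have "zero_mul_sum (w # l) \<approx> Add ?w (zero_mul_sum l)" by (rule zero_mul_sum_Cons)
    also have "\<dots> \<approx> Add ?w (Add (zero_mul_sum l) ?v)" by (rule derivable_cong_Add2[OF IH])
    also have "\<dots> \<approx> Add (Add ?w (zero_mul_sum l)) ?v" by (rule derivable.sym[OF md_add_assoc])
    also have "\<dots> \<approx> Add (zero_mul_sum (w # l)) ?v"
      by (rule derivable_cong_Add1[OF derivable.sym[OF zero_mul_sum_Cons]])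
    finally show ?thesis .
  qed
qed

lemma zero_mul_sum_subset_absorb:
  "set l1 \<subseteq> set l2 \<Longrightarrow> Add (zero_mul_sum l2) (zero_mul_sum l1) \<approx> zero_mul_sum l2"
proof (induction l1)
  case Nil
  have "Add (zero_mul_sum l2) (zero_mul_sum []) \<approx> Add (zero_mul_sum l2) Zero"
    by (rule derivable_cong_Add2[OF zero_mul_sum_Nil])
  also have "\<dots> \<approx> zero_mul_sum l2" by (rule md_add_zero)
  finally show ?case .
next
  case (Cons v l1)
  then have IH: "Add (zero_mul_sum l2) (zero_mul_sum l1) \<approx> zero_mul_sum l2"
    and v: "v \<in> set l2" by auto
  have "Add (zero_mul_sum l2) (zero_mul_sum (v # l1))
        \<approx> Add (zero_mul_sum l2) (Add (Mul Zero (Var v)) (zero_mul_sum l1))"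
    by (rule derivable_cong_Add2[OF zero_mul_sum_Cons])
  also have "\<dots> \<approx> Add (Add (zero_mul_sum l2) (Mul Zero (Var v))) (zero_mul_sum l1)"
    by (rule derivable.sym[OF md_add_assoc])
  also have "\<dots> \<approx> Add (zero_mul_sum l2) (zero_mul_sum l1)"
    by (rule derivable_cong_Add1[OF derivable.sym[OF zero_mul_sum_absorb[OF v]]])
  also have "\<dots> \<approx> zero_mul_sum l2" by (rule IH)
  finally show ?case .
qed

lemma zero_mul_sum_set_eq: "set l1 = set l2 \<Longrightarrow> zero_mul_sum l1 \<approx> zero_mul_sum l2"
proof -
  assume sets: "set l1 = set l2"
  have "zero_mul_sum l1 \<approx> Add (zero_mul_sum l1) (zero_mul_sum l2)"
    by (rule derivable.sym[OF zero_mul_sum_subset_absorb]) (simp add: sets)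
  also have "\<dots> \<approx> Add (zero_mul_sum l2) (zero_mul_sum l1)" by (rule md_add_comm)
  also have "\<dots> \<approx> zero_mul_sum l2" by (rule zero_mul_sum_subset_absorb) (simp add: sets)
  finally show ?thesis .
qed

lemma zero_mul_sum_union:
  assumes "Mul Zero s \<approx> zero_mul_sum ls" and "Mul Zero t \<approx> zero_mul_sum lt"
    and "set l = set ls \<union> set lt"
  shows "Add (Mul Zero s) (Mul Zero t) \<approx> zero_mul_sum l"
proof -
  have "Add (Mul Zero s) (Mul Zero t) \<approx> Add (zero_mul_sum ls) (zero_mul_sum lt)"
    by (rule derivable.cong_Add[OF assms(1,2)])
  also have "\<dots> \<approx> zero_mul_sum (ls @ lt)" by (rule derivable.sym[OF zero_mul_sum_append])
  also have "\<dots> \<approx> zero_mul_sum l" by (rule zero_mul_sum_set_eq) (simp add: assms(3))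
  finally show ?thesis .
qed

lemma zero_mul_f_term:
  "is_f_term t \<Longrightarrow> set l = VAR t \<Longrightarrow> Mul Zero t \<approx> zero_mul_sum l"
proof (induction t arbitrary: l)
  case (Var v)
  have "Mul Zero (Var v) = zero_mul_sum [v]" by simp
  also have "zero_mul_sum [v] \<approx> zero_mul_sum l" by (rule zero_mul_sum_set_eq) (simp add: Var)
  finally show ?case .
next
  case Zero
  have "Mul Zero Zero = zero_mul_sum []" by simp
  also have "zero_mul_sum [] \<approx> zero_mul_sum l" by (rule zero_mul_sum_set_eq) (simp add: Zero)
  finally show ?case .
next
  case One
  have "Mul Zero One \<approx> Zero" by (rule zero_mul_one)
  also have "\<dots> \<approx> zero_mul_sum []" by (rule derivable.sym[OF zero_mul_sum_Nil])
  also have "\<dots> \<approx> zero_mul_sum l" by (rule zero_mul_sum_set_eq) (simp add: One)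
  finally show ?case .
next
  case (Add s t)
  obtain ls lt where ls: "set ls = VAR s" and lt: "set lt = VAR t"
    using finite_list[OF finite_VAR] by metis
  have "Mul Zero (Add s t) \<approx> Add (Mul Zero s) (Mul Zero t)" by (rule md_distrib)
  also have "\<dots> \<approx> zero_mul_sum l"
    by (rule zero_mul_sum_union[of _ ls _ lt]) (use Add ls lt in auto)
  finally show ?case .
next
  case (Mul s t)
  obtain ls lt where ls: "set ls = VAR s" and lt: "set lt = VAR t"
    using finite_list[OF finite_VAR] by metis
  have "Mul Zero (Mul s t) \<approx> Add (Mul Zero s) (Mul Zero t)" by (rule zero_mul_mul)
  also have "\<dots> \<approx> zero_mul_sum l"
    by (rule zero_mul_sum_union[of _ ls _ lt]) (use Mul ls lt in auto)
  finally show ?case .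
next
  case (Neg s)
  have "Mul Zero (Neg s) \<approx> Mul Zero s" by (rule zero_mul_neg)
  also have "\<dots> \<approx> zero_mul_sum l" using Neg by simp
  finally show ?case .
qed simp_all

end

theorem proposition2p4:
  fixes t :: "'v trm" and x y z :: 'v and xs :: "'v list"
  assumes "x \<noteq> y" and "y \<noteq> z" and "x \<noteq> z"
    and "is_f_term t"
    and "distinct xs" and "set xs = VAR t"
  shows "derivable (Md_bot (x, y, z)) (Mul Zero t) (Mul Zero (var_sum xs))"
  using zero_mul_f_term[OF assms(1-3) assms(4) assms(6)] .

end
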